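(* Let $\mathfrak{g}$ be a semi-simple real Lie algebra with a faithful finite dimensional real representation $\mathfrak{g}\to\mathrm{End}(W)$, and suppose there is a symmetric bilinear $\mathfrak{g}$-equivariant map $\wedge:W\times W\to W^*$ which does not vanish identically on any $2$-dimensional linear subspace of $W$. Then $\mathfrak{g}$ does not contain any subalgebra isomorphic to $\mathfrak{sl}_2(\mathbf{R})\oplus\mathfrak{sl}_2(\mathbf{R})$.
   Context: $W^*$ is the dual representation; equivariance of $\wedge$ means $X\cdot(a\wedge b)=(X\cdot a)\wedge b+a\wedge(X\cdot b)$ for $X\in\mathfrak{g}$. *)

theory Defs
  imports "HOL-Analysis.Analysis"
begin

definition lie_algebra :: "('g::real_vector \<Rightarrow> 'g \<Rightarrow> 'g) \<Rightarrow> bool" where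
  "lie_algebra br \<longleftrightarrow> bilinear br \<and> (\<forall>x. br x x = 0) \<and>
     (\<forall>x y z. br x (br y z) + br y (br z x) + br z (br x y) = 0)"

definition lie_ideal :: "('g::real_vector \<Rightarrow> 'g \<Rightarrow> 'g) \<Rightarrow> 'g set \<Rightarrow> bool" where
  "lie_ideal br I \<longleftrightarrow> subspace I \<and> (\<forall>x y. y \<in> I \<longrightarrow> br x y \<in> I)"

fun derived_series :: "('g::real_vector \<Rightarrow> 'g \<Rightarrow> 'g) \<Rightarrow> nat \<Rightarrow> 'g set \<Rightarrow> 'g set" where
  "derived_series br 0 I = I"
| "derived_series br (Suc n) I =
     span {br x y | x y. x \<in> derived_series br n I \<and> y \<in> derived_series br n I}"

definition solvable_lie :: "('g::real_vector \<Rightarrow> 'g \<Rightarrow> 'g) \<Rightarrow> 'g set \<Rightarrow> bool" where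
  "solvable_lie br I \<longleftrightarrow> (\<exists>n. derived_series br n I = {0})"

definition semisimple_lie :: "('g::real_vector \<Rightarrow> 'g \<Rightarrow> 'g) \<Rightarrow> bool" where
  "semisimple_lie br \<longleftrightarrow> lie_algebra br \<and> (\<exists>B::'g set. finite B \<and> span B = UNIV) \<and>
     (\<forall>I. lie_ideal br I \<and> solvable_lie br I \<longrightarrow> I = {0})"

definition lie_rep :: "('g::real_vector \<Rightarrow> 'g \<Rightarrow> 'g) \<Rightarrow> ('g \<Rightarrow> 'w::real_vector \<Rightarrow> 'w) \<Rightarrow> bool" where
  "lie_rep br rho \<longleftrightarrow>
     (\<forall>x y w. rho (x + y) w = rho x w + rho y w) \<and>
     (\<forall>(c::real) x w. rho (c *\<^sub>R x) w = c *\<^sub>R rho x w) \<and>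
     (\<forall>x. linear (rho x)) \<and>
     (\<forall>x y w. rho (br x y) w = rho x (rho y w) - rho y (rho x w))"

definition sl2sl2 :: "((real^2^2) \<times> (real^2^2)) set" where
  "sl2sl2 = {(A, B). trace A = 0 \<and> trace B = 0}"

definition sl2sl2_bracket ::
  "(real^2^2) \<times> (real^2^2) \<Rightarrow> (real^2^2) \<times> (real^2^2) \<Rightarrow> (real^2^2) \<times> (real^2^2)" where
  "sl2sl2_bracket p q = (fst p ** fst q - fst q ** fst p, snd p ** snd q - snd q ** snd p)"

text \<open>g contains a Lie subalgebra S isomorphic to sl2(R)+sl2(R): a linear bijection
  phi from sl2sl2 onto S preserving brackets (S is then automatically a subspace closed
  under the bracket, but we state it explicitly).\<close>
definition has_sl2sl2_subalgebra :: "('g::real_vector \<Rightarrow> 'g \<Rightarrow> 'g) \<Rightarrow> bool" where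
  "has_sl2sl2_subalgebra br \<longleftrightarrow>
     (\<exists>S phi. subspace S \<and> (\<forall>x\<in>S. \<forall>y\<in>S. br x y \<in> S) \<and>
        (\<forall>p\<in>sl2sl2. \<forall>q\<in>sl2sl2. \<forall>c::real.
            phi (p + q) = phi p + phi q \<and> phi (c *\<^sub>R p) = c *\<^sub>R phi p) \<and>
        inj_on phi sl2sl2 \<and> phi ` sl2sl2 = S \<and>
        (\<forall>p\<in>sl2sl2. \<forall>q\<in>sl2sl2. phi (sl2sl2_bracket p q) = br (phi p) (phi q)))"

end

theory Submission
  imports Defs "HOL-Library.Function_Algebras"
begin

(*
  Suppose sl2(R) + sl2(R) embeds in g.  Through rho it yields two
  commuting sl2-triples (E1,F1,H1), (E2,F2,H2) of endomorphisms of W with H1, H2 nonzero.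
  From sl2-theory (E and F are nilpotent, highest weights are natural numbers, weights
  are symmetric) each H_i has a largest eigenvalue M_i > 0, and -2 M_i is not an
  eigenvalue.  Equivariance of the wedge then forces wedge a b = 0 whenever H_i a = M_i a
  and H_i b = M_i b, so by non-degeneracy each top eigenspace is a line, spanned by a
  resp. b.  The other triple preserves this line and hence kills it, so a, b span a
  plane.  The wedge vanishes on a and on b (weight argument), and wedge a b, viewed as a
  vector of the dual representation, would be a joint highest weight vector; pushing it
  down to the joint lowest weight and using that the dual top eigenspace is again a line
  gives a contradiction.  So the wedge vanishes on the plane spanned by a and b.
*)

section \<open>Endomorphisms of a finite-dimensional space\<close>

text \<open>Functions into a real vector space form a real vector space; we use this for the
  space of endomorphisms, on which the commutator with H acts.\<close>

instantiation "fun" :: (type, real_vector) real_vector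
begin
definition scaleR_fun :: "real \<Rightarrow> ('a \<Rightarrow> 'b) \<Rightarrow> 'a \<Rightarrow> 'b" where
  "scaleR_fun c f = (\<lambda>x. c *\<^sub>R f x)"
instance by standard (auto simp: scaleR_fun_def fun_eq_iff algebra_simps)
end

lemma scaleR_fun_apply: "(c *\<^sub>R f) x = c *\<^sub>R f x"
  by (simp add: scaleR_fun_def)

lemma sum_fun_apply: "(\<Sum>i\<in>A. f i) x = (\<Sum>i\<in>A. f i x)"
  by (induction A rule: infinite_finite_induct) auto

lemma eigenvector_notin_span:
  fixes T :: "'a::real_vector \<Rightarrow> 'a"
  assumes T: "linear T" and S: "finite S" "independent S"
    and eig: "\<And>v. v \<in> S \<Longrightarrow> \<exists>\<mu>. T v = \<mu> *\<^sub>R v \<and> \<mu> \<noteq> l"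
    and x: "x \<noteq> 0" "T x = l *\<^sub>R x"
  shows "x \<notin> span S"
proof
  assume "x \<in> span S"
  then obtain u where u: "(\<Sum>v\<in>S. u v *\<^sub>R v) = x"
    using real_vector.span_finite[of S] S(1) by auto
  have "\<forall>v\<in>S. \<exists>\<mu>. T v = \<mu> *\<^sub>R v \<and> \<mu> \<noteq> l"
    using eig by blast
  from bchoice[OF this] obtain \<mu> where \<mu>: "\<And>v. v \<in> S \<Longrightarrow> T v = \<mu> v *\<^sub>R v \<and> \<mu> v \<noteq> l"
    by blast
  have "(\<Sum>v\<in>S. (u v * \<mu> v) *\<^sub>R v) = T x"
    by (simp add: u[symmetric] linear_sum[OF T] linear_scale[OF T] \<mu> cong: sum.cong)
  also have "\<dots> = l *\<^sub>R x"
    by (rule x(2))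
  also have "\<dots> = (\<Sum>v\<in>S. (l * u v) *\<^sub>R v)"
    unfolding u[symmetric] by (simp add: scaleR_sum_right)
  finally have sum0: "(\<Sum>v\<in>S. (u v * (\<mu> v - l)) *\<^sub>R v) = 0"
    by (simp add: algebra_simps sum_subtractf)
  have indep: "\<forall>v\<in>S. w v = 0" if "(\<Sum>v\<in>S. w v *\<^sub>R v) = 0" for w
    using S real_vector.dependent_finite[of S] that by auto
  have prod0: "\<forall>v\<in>S. u v * (\<mu> v - l) = 0"
    by (rule indep[OF sum0])
  have "u v = 0" if "v \<in> S" for v
    using prod0 \<mu>[OF that] that by auto
  then show False
    using u x(1) by simp
qed

lemma eigenvectors_independent:
  fixes T :: "'a::real_vector \<Rightarrow> 'a" and x :: "'i \<Rightarrow> 'a" and lam :: "'i \<Rightarrow> real"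
  assumes T: "linear T" and fin: "finite I" and inj: "inj_on lam I"
    and ev: "\<forall>i\<in>I. x i \<noteq> 0 \<and> T (x i) = lam i *\<^sub>R x i"
  shows "independent (x ` I) \<and> inj_on x I"
  using fin inj ev
proof (induction I rule: finite_induct)
  case empty
  then show ?case by (simp add: real_vector.independent_empty)
next
  case (insert j I)
  have "inj_on lam I" "\<forall>i\<in>I. x i \<noteq> 0 \<and> T (x i) = lam i *\<^sub>R x i"
    using insert.prems by simp_all
  then have IH: "independent (x ` I)" "inj_on x I"
    using insert.IH by blast+
  have xj: "x j \<noteq> 0" "T (x j) = lam j *\<^sub>R x j"
    using insert.prems(2) by simp_all
  have others: "\<exists>\<mu>. T v = \<mu> *\<^sub>R v \<and> \<mu> \<noteq> lam j" if v: "v \<in> x ` I" for v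
  proof -
    obtain i where i: "i \<in> I" "v = x i"
      using v by blast
    have "i \<noteq> j"
      using i(1) insert.hyps(2) by blast
    then have "lam i \<noteq> lam j"
      using inj_onD[OF insert.prems(1), of i j] i(1) by auto
    moreover have "T v = lam i *\<^sub>R v"
      using insert.prems(2) i by simp
    ultimately show ?thesis
      by blast
  qed
  have new: "x j \<notin> span (x ` I)"
    by (rule eigenvector_notin_span[OF T finite_imageI[OF insert.hyps(1)] IH(1) others xj])
  have "x j \<notin> x ` I"
  proof
    assume "x j \<in> x ` I"
    then have "x j \<in> span (x ` I)"
      by (rule real_vector.span_base)
    with new show False ..
  qed
  moreover have "I - {j} = I"
    using insert.hyps(2) by blast
  ultimately have "inj_on x (insert j I)"
    using IH(2) by simp
  moreover have "independent (x ` insert j I)"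
    using real_vector.independent_insertI[OF new IH(1)] by simp
  ultimately show ?case
    by blast
qed

lemma linear_funpow:
  fixes X :: "'a::real_vector \<Rightarrow> 'a"
  assumes "linear X"
  shows "linear (X ^^ k)"
proof (induction k)
  case 0
  show ?case unfolding funpow.simps(1) by (rule linear_id)
next
  case (Suc k)
  show ?case unfolding funpow.simps(2) by (rule linear_compose[OF Suc.IH assms])
qed

text \<open>Every endomorphism of a Euclidean space is a combination of the finitely many
  rank-one maps built from the basis, so the endomorphisms span a finite-dimensional
  space.\<close>

lemma linear_in_span_rank_one:
  fixes f :: "'a::euclidean_space \<Rightarrow> 'b::euclidean_space"
  assumes "linear f"
  shows "f \<in> span ((\<lambda>(b,c). (\<lambda>x. (x \<bullet> b) *\<^sub>R c)) ` (Basis \<times> Basis))"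
proof -
  have "f = (\<Sum>p\<in>Basis \<times> Basis. (f (fst p) \<bullet> snd p) *\<^sub>R (\<lambda>x. (x \<bullet> fst p) *\<^sub>R snd p))"
  proof
    fix x
    have "(\<Sum>p\<in>Basis \<times> Basis. (f (fst p) \<bullet> snd p) *\<^sub>R (\<lambda>x. (x \<bullet> fst p) *\<^sub>R snd p)) x
        = (\<Sum>b\<in>Basis. \<Sum>c\<in>Basis. ((f b \<bullet> c) * (x \<bullet> b)) *\<^sub>R c)"
      by (simp add: sum_fun_apply scaleR_fun_apply sum.cartesian_product split_def)
    also have "\<dots> = (\<Sum>b\<in>Basis. (x \<bullet> b) *\<^sub>R (\<Sum>c\<in>Basis. (f b \<bullet> c) *\<^sub>R c))"
      by (simp add: scaleR_sum_right mult.commute)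
    also have "\<dots> = (\<Sum>b\<in>Basis. (x \<bullet> b) *\<^sub>R f b)"
      by (simp add: euclidean_representation)
    also have "\<dots> = f (\<Sum>b\<in>Basis. (x \<bullet> b) *\<^sub>R b)"
      using assms by (simp add: linear_sum linear_scale)
    also have "\<dots> = f x"
      by (simp add: euclidean_representation)
    finally show "f x = (\<Sum>p\<in>Basis \<times> Basis. (f (fst p) \<bullet> snd p) *\<^sub>R (\<lambda>x. (x \<bullet> fst p) *\<^sub>R snd p)) x"
      by simp
  qed
  also have "\<dots> \<in> span ((\<lambda>(b,c). (\<lambda>x. (x \<bullet> b) *\<^sub>R c)) ` (Basis \<times> Basis))"
    by (intro real_vector.span_sum real_vector.span_scale real_vector.span_base) auto
  finally show ?thesis .
qed

lemma commutator_power: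
  fixes H X :: "'a::real_vector \<Rightarrow> 'a"
  assumes X: "linear X" and c: "\<forall>v. H (X v) - X (H v) = c *\<^sub>R X v"
  shows "H ((X ^^ k) v) - (X ^^ k) (H v) = (c * real k) *\<^sub>R (X ^^ k) v"
proof (induction k arbitrary: v)
  case 0
  then show ?case by simp
next
  case (Suc k)
  have "H ((X ^^ Suc k) v) - (X ^^ Suc k) (H v)
      = X (H ((X ^^ k) v) - (X ^^ k) (H v)) + c *\<^sub>R X ((X ^^ k) v)"
    using c[rule_format, of "(X ^^ k) v"] linear_diff[OF X] by (simp add: algebra_simps)
  also have "\<dots> = (c * real (Suc k)) *\<^sub>R (X ^^ Suc k) v"
    using Suc.IH linear_scale[OF X] by (simp add: algebra_simps)
  finally show ?case .
qed

text \<open>An endomorphism X with [H, X] = c X for c \<noteq> 0 is nilpotent: otherwise the powers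
  X^k would be infinitely many independent eigenvectors of ad H in the
  finite-dimensional space of endomorphisms.\<close>

lemma ad_eigenvector_nilpotent:
  fixes H X :: "'a::euclidean_space \<Rightarrow> 'a"
  assumes H: "linear H" and X: "linear X" and c0: "c \<noteq> 0"
    and c: "\<forall>v. H (X v) - X (H v) = c *\<^sub>R X v"
  shows "\<exists>N. \<forall>v. (X ^^ N) v = 0"
proof (rule ccontr)
  assume "\<not> ?thesis"
  then have nz: "\<forall>k. X ^^ k \<noteq> 0" by (auto simp: fun_eq_iff)
  define T where "T = (\<lambda>(b,c). (\<lambda>x. (x \<bullet> b) *\<^sub>R c)) ` ((Basis::'a set) \<times> (Basis::'a set))"
  define n where "n = card T"
  define ad where "ad Y = (\<lambda>v. H (Y v) - Y (H v))" for Y :: "'a \<Rightarrow> 'a"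
  have ad: "linear ad"
    by (rule linearI)
      (simp_all add: ad_def fun_eq_iff linear_add[OF H] linear_scale[OF H] scaleR_fun_apply algebra_simps)
  have ev: "\<forall>k\<in>{0..n}. X ^^ k \<noteq> 0 \<and> ad (X ^^ k) = (c * real k) *\<^sub>R (X ^^ k)"
    using nz commutator_power[OF X c] by (auto simp: ad_def fun_eq_iff scaleR_fun_apply)
  have "inj_on (\<lambda>k. c * real k) {0..n}"
    using c0 by (auto simp: inj_on_def)
  from eigenvectors_independent[OF ad _ this ev]
  have ind: "independent ((\<lambda>k. X ^^ k) ` {0..n})" and inj: "inj_on (\<lambda>k. X ^^ k) {0..n}"
    by auto
  have "(\<lambda>k. X ^^ k) ` {0..n} \<subseteq> span T"
    unfolding T_def using linear_in_span_rank_one[OF linear_funpow[OF X]] by auto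
  from real_vector.independent_span_bound[OF _ ind this]
  have "card ((\<lambda>k. X ^^ k) ` {0..n}) \<le> n"
    unfolding n_def T_def by simp
  then show False
    using card_image[OF inj] by simp
qed

lemma last_nonzero_iterate:
  assumes "(X ^^ N) x = 0" "x \<noteq> 0"
  shows "\<exists>k. (X ^^ k) x \<noteq> 0 \<and> X ((X ^^ k) x) = 0"
  using assms
proof (induction N arbitrary: x)
  case 0
  then show ?case by simp
next
  case (Suc N)
  show ?case
  proof (cases "X x = 0")
    case True
    then show ?thesis using Suc.prems by (intro exI[of _ 0]) simp
  next
    case False
    have "(X ^^ N) (X x) = 0"
      using Suc.prems(1) by (simp add: funpow_Suc_right del: funpow.simps)
    from Suc.IH[OF this False] obtain k where "(X ^^ k) (X x) \<noteq> 0" "X ((X ^^ k) (X x)) = 0"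
      by blast
    then show ?thesis
      by (intro exI[of _ "Suc k"]) (simp add: funpow_Suc_right del: funpow.simps)
  qed
qed

lemma commute_funpow:
  assumes "\<forall>v. X (Y v) = Y (X v)"
  shows "X ((Y ^^ k) v) = (Y ^^ k) (X v)"
  using assms by (induction k) auto

definition has_eigenvalue :: "('a::real_vector \<Rightarrow> 'a) \<Rightarrow> real \<Rightarrow> bool" where
  "has_eigenvalue X c \<longleftrightarrow> (\<exists>v. v \<noteq> 0 \<and> X v = c *\<^sub>R v)"

text \<open>A linear map of a Euclidean space has only finitely many eigenvalues, since
  eigenvectors for distinct eigenvalues are independent.\<close>

lemma finite_eigenvalues:
  fixes X :: "'a::euclidean_space \<Rightarrow> 'a"
  assumes X: "linear X"
  shows "finite {c. has_eigenvalue X c}"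
proof (rule ccontr)
  assume "infinite {c. has_eigenvalue X c}"
  then obtain C where C: "finite C" "card C = Suc DIM('a)" "C \<subseteq> {c. has_eigenvalue X c}"
    using infinite_arbitrarily_large by blast
  then have "\<forall>c\<in>C. \<exists>v. v \<noteq> 0 \<and> X v = c *\<^sub>R v"
    unfolding has_eigenvalue_def by blast
  from bchoice[OF this] obtain x where x: "\<forall>c\<in>C. x c \<noteq> 0 \<and> X (x c) = c *\<^sub>R x c"
    by blast
  from eigenvectors_independent[OF X C(1) _ x]
  have "independent (x ` C)" "inj_on x C"
    by auto
  then have "card C \<le> DIM('a)"
    using independent_bound[of "x ` C"] card_image[of x C] by simp
  then show False
    using C(2) by simp
qed

section \<open>Representations of sl2\<close>

locale sl2_triple =
  fixes E F H :: "'a::euclidean_space \<Rightarrow> 'a"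
  assumes linE: "linear E" and linF: "linear F" and linH: "linear H"
    and HE: "\<forall>v. H (E v) - E (H v) = 2 *\<^sub>R E v"
    and HF: "\<forall>v. H (F v) - F (H v) = (-2) *\<^sub>R F v"
    and EF: "\<forall>v. E (F v) - F (E v) = H v"
begin

text \<open>Exchanging the roles of E and F (and negating H) gives again an sl2-triple; this
  turns statements about highest weights into statements about lowest weights.\<close>

lemma opposite: "sl2_triple F E (\<lambda>v. - H v)"
proof (rule sl2_triple.intro)
  show "linear F" by (rule linF)
  show "linear E" by (rule linE)
  show "linear (\<lambda>v. - H v)"
    by (rule linearI) (simp_all add: linear_add[OF linH] linear_scale[OF linH])
  show "\<forall>v. - H (F v) - F (- H v) = 2 *\<^sub>R F v"
    using HF by (simp add: linear_neg[OF linF] algebra_simps)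
  show "\<forall>v. - H (E v) - E (- H v) = (-2) *\<^sub>R E v"
    using HE by (simp add: linear_neg[OF linE] algebra_simps)
  show "\<forall>v. F (E v) - E (F v) = - H v"
    using EF by (metis minus_diff_eq)
qed

lemma linear_E_pow: "linear (E ^^ k)"
  by (rule linear_funpow[OF linE])

lemma linear_F_pow: "linear (F ^^ k)"
  by (rule linear_funpow[OF linF])

lemma E_nilpotent: "\<exists>N. \<forall>v. (E ^^ N) v = 0"
  using ad_eigenvector_nilpotent[OF linH linE _ HE] by simp

lemma F_nilpotent: "\<exists>N. \<forall>v. (F ^^ N) v = 0"
  using ad_eigenvector_nilpotent[OF linH linF _ HF] by simp

lemma E_pow_weight: "H v = \<gamma> *\<^sub>R v \<Longrightarrow> H ((E ^^ k) v) = (\<gamma> + 2 * real k) *\<^sub>R (E ^^ k) v"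
  using commutator_power[OF linE HE, of k v] linear_scale[OF linear_E_pow]
  by (simp add: algebra_simps eq_diff_eq)

lemma E_F_pow:
  "E ((F ^^ Suc j) v) = (F ^^ Suc j) (E v) + real (Suc j) *\<^sub>R (F ^^ j) (H v - real j *\<^sub>R v)"
proof (induction j arbitrary: v)
  case 0
  then show ?case using EF by (simp add: algebra_simps eq_diff_eq)
next
  case (Suc j)
  have EF': "E (F y) = F (E y) + H y" for y
    using EF[rule_format, of y] by (simp add: diff_eq_eq)
  have HFj: "H ((F ^^ Suc j) v) = (F ^^ Suc j) (H v) - (2 * real (Suc j)) *\<^sub>R (F ^^ Suc j) v"
    using commutator_power[OF linF HF, of "Suc j" v] by (simp add: algebra_simps eq_diff_eq)
  have "E ((F ^^ Suc (Suc j)) v) = F (E ((F ^^ Suc j) v)) + H ((F ^^ Suc j) v)"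
    using EF' by simp
  also have "\<dots> = (F ^^ Suc (Suc j)) (E v)
     + real (Suc j) *\<^sub>R (F ^^ Suc j) (H v - real j *\<^sub>R v)
     + ((F ^^ Suc j) (H v) - (2 * real (Suc j)) *\<^sub>R (F ^^ Suc j) v)"
    using Suc.IH HFj linear_add[OF linF] linear_scale[OF linF] by simp
  also have "\<dots> = (F ^^ Suc (Suc j)) (E v) + real (Suc (Suc j)) *\<^sub>R (F ^^ Suc j) (H v - real (Suc j) *\<^sub>R v)"
    unfolding linear_diff[OF linear_F_pow] linear_scale[OF linear_F_pow]
    by (simp add: algebra_simps scaleR_2)
  finally show ?case .
qed

lemma bottom_of_string:
  assumes Ev: "E v = 0" and last: "F ((F ^^ j) v) = 0"
  shows "(F ^^ j) (H v) = real j *\<^sub>R (F ^^ j) v"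
    and "H ((F ^^ j) v) = (- real j) *\<^sub>R (F ^^ j) v"
proof -
  have "E ((F ^^ Suc j) v) = 0"
    using last linear_0[OF linE] by simp
  moreover have "(F ^^ Suc j) (E v) = 0"
    using Ev linear_0[OF linear_F_pow] linear_0[OF linF] by simp
  ultimately have "(F ^^ j) (H v - real j *\<^sub>R v) = 0"
    using E_F_pow[of j v] by simp
  then show FjH: "(F ^^ j) (H v) = real j *\<^sub>R (F ^^ j) v"
    using linear_diff[OF linear_F_pow] linear_scale[OF linear_F_pow] by simp
  have "H ((F ^^ j) v) = (F ^^ j) (H v) + (-2 * real j) *\<^sub>R (F ^^ j) v"
    using commutator_power[OF linF HF, of j v] by (metis add.commute diff_add_cancel)
  also have "\<dots> = (real j + (-2 * real j)) *\<^sub>R (F ^^ j) v"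
    unfolding FjH by (simp only: scaleR_add_left)
  finally show "H ((F ^^ j) v) = (- real j) *\<^sub>R (F ^^ j) v"
    by simp
qed

lemma highest_weight:
  assumes p: "p \<noteq> 0" "E p = 0" "H p = \<mu> *\<^sub>R p"
  shows "\<exists>n. \<mu> = real n \<and> (F ^^ n) p \<noteq> 0 \<and> H ((F ^^ n) p) = (- \<mu>) *\<^sub>R (F ^^ n) p"
proof -
  obtain N where "\<forall>v. (F ^^ N) v = 0"
    using F_nilpotent by blast
  then obtain j where j: "(F ^^ j) p \<noteq> 0" "F ((F ^^ j) p) = 0"
    using last_nonzero_iterate[where X=F and N=N and x=p] p(1) by blast
  have "\<mu> *\<^sub>R (F ^^ j) p = real j *\<^sub>R (F ^^ j) p"
    using bottom_of_string(1)[OF p(2) j(2)] p(3) linear_scale[OF linear_F_pow] by simp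
  then have "\<mu> = real j"
    using j(1) by simp
  then show ?thesis
    using j bottom_of_string(2)[OF p(2) j(2)] by auto
qed

lemma climb_to_highest:
  assumes v: "v \<noteq> 0" "H v = \<gamma> *\<^sub>R v"
  shows "\<exists>k u. u \<noteq> 0 \<and> E u = 0 \<and> H u = (\<gamma> + 2 * real k) *\<^sub>R u"
proof -
  obtain N where "\<forall>v. (E ^^ N) v = 0"
    using E_nilpotent by blast
  then obtain k where "(E ^^ k) v \<noteq> 0" "E ((E ^^ k) v) = 0"
    using last_nonzero_iterate[where X=E and N=N and x=v] v(1) by blast
  then show ?thesis
    using E_pow_weight[OF v(2)] by blast
qed

text \<open>Every eigenvalue \<gamma> of H is bounded below by -n for some natural eigenvalue n:
  descend from \<gamma> to a lowest weight -n, whose string reaches weight n.\<close>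

lemma weight_lower_bound:
  assumes "has_eigenvalue H \<gamma>"
  shows "\<exists>n. has_eigenvalue H (real n) \<and> - real n \<le> \<gamma>"
proof -
  interpret opp: sl2_triple F E "\<lambda>v. - H v"
    by (rule opposite)
  obtain v where v: "v \<noteq> 0" "- H v = (- \<gamma>) *\<^sub>R v"
    using assms unfolding has_eigenvalue_def by auto
  obtain k u where u: "u \<noteq> 0" "F u = 0" "- H u = (- \<gamma> + 2 * real k) *\<^sub>R u"
    using opp.climb_to_highest[OF v] by blast
  obtain n where n: "- \<gamma> + 2 * real k = real n" "(E ^^ n) u \<noteq> 0"
    "- H ((E ^^ n) u) = (- (- \<gamma> + 2 * real k)) *\<^sub>R (E ^^ n) u"
    using opp.highest_weight[OF u] by blast
  have "has_eigenvalue H (real n)"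
    unfolding has_eigenvalue_def using n by (intro exI[of _ "(E ^^ n) u"]) (simp add: algebra_simps)
  moreover have "- real n \<le> \<gamma>"
    using n(1) by simp
  ultimately show ?thesis
    by blast
qed

text \<open>If H has no nonzero eigenvalue, then every vector killed by E is killed by F and
  H: the bottom of its F-string would have the nonzero weight -j.\<close>

lemma kernel_E_without_nonzero_weights:
  assumes Z: "\<And>c. c \<noteq> 0 \<Longrightarrow> \<not> has_eigenvalue H c" and Ev: "E v = 0"
  shows "F v = 0 \<and> H v = 0"
proof (cases "v = 0")
  case True
  then show ?thesis using linear_0[OF linF] linear_0[OF linH] by simp
next
  case False
  obtain N where "\<forall>v. (F ^^ N) v = 0"
    using F_nilpotent by blast
  then obtain j where j: "(F ^^ j) v \<noteq> 0" "F ((F ^^ j) v) = 0"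
    using last_nonzero_iterate[where X=F and N=N and x=v] False by blast
  have "j = 0"
    using Z[of "- real j"] bottom_of_string(2)[OF Ev j(2)] j(1)
    unfolding has_eigenvalue_def by fastforce
  then show ?thesis
    using j(2) bottom_of_string(1)[OF Ev j(2)] by simp
qed

text \<open>If, moreover, ker E is killed by F and H, then E = 0: otherwise pick w with
  E w \<noteq> 0 = E (E w) and derive that F w has the nonzero weight -4.\<close>

lemma E_zero_without_nonzero_weights:
  assumes Z: "\<And>c. c \<noteq> 0 \<Longrightarrow> \<not> has_eigenvalue H c"
  shows "E x = 0"
proof (rule ccontr)
  assume x: "E x \<noteq> 0"
  have K: "F v = 0 \<and> H v = 0" if "E v = 0" for v
    using kernel_E_without_nonzero_weights[OF Z that] .
  obtain N where "\<forall>v. (E ^^ N) v = 0"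
    using E_nilpotent by blast
  then obtain k where k: "(E ^^ k) (E x) \<noteq> 0" "E ((E ^^ k) (E x)) = 0"
    using last_nonzero_iterate[where X=E and N=N and x="E x"] x by blast
  define w where "w = (E ^^ k) x"
  define u where "u = E w"
  have u: "u \<noteq> 0" "E u = 0"
    using k by (simp_all add: u_def w_def funpow_swap1)
  have Fu: "F u = 0" and Hu: "H u = 0"
    using K[OF u(2)] by auto
  have "- E (H w) = 2 *\<^sub>R u"
    using HE[rule_format, of w] Hu by (simp add: u_def)
  then have EHw: "E (H w) = (-2) *\<^sub>R u"
    by (metis minus_minus scaleR_minus_left)
  have Hw: "H w = E (F w)"
    using EF[rule_format, of w] Fu by (simp add: u_def)
  have "E (H w + 2 *\<^sub>R w) = 0"
    using EHw linear_add[OF linE] linear_scale[OF linE] by (simp add: u_def)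
  then have "F (H w + 2 *\<^sub>R w) = 0"
    using K by blast
  then have FHw: "F (H w) = (-2) *\<^sub>R F w"
    using linear_add[OF linF] linear_scale[OF linF] by (simp add: eq_neg_iff_add_eq_0)
  have "H (F w) = (-2) *\<^sub>R F w + F (H w)"
    using HF[rule_format, of w] by (simp add: diff_eq_eq)
  also have "\<dots> = ((-2) + (-2)) *\<^sub>R F w"
    unfolding FHw by (simp only: scaleR_add_left)
  finally have "H (F w) = (-4) *\<^sub>R F w"
    by simp
  then have "F w = 0"
    using Z[of "-4"] unfolding has_eigenvalue_def by auto
  then have "(-2) *\<^sub>R u = 0"
    using EHw Hw linear_0[OF linE] by simp
  then show False
    using u(1) by simp
qed

lemma positive_eigenvalue:
  assumes Hn: "\<exists>v. H v \<noteq> 0"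
  shows "\<exists>c > 0. has_eigenvalue H c"
proof (rule ccontr)
  assume neg: "\<not> ?thesis"
  have Z: "\<not> has_eigenvalue H c" if "c \<noteq> 0" for c
  proof
    assume c: "has_eigenvalue H c"
    then obtain n where n: "has_eigenvalue H (real n)" "- real n \<le> c"
      using weight_lower_bound by blast
    show False
    proof (cases "c > 0")
      case True
      then show False using neg c by blast
    next
      case False
      then have "real n > 0" using that n(2) by simp
      then show False using neg n(1) by blast
    qed
  qed
  have "H v = 0" for v
    using EF[rule_format, of v] E_zero_without_nonzero_weights[OF Z] linear_0[OF linF] by simp
  then show False
    using Hn by blast
qed

lemma top_weight:
  assumes Hn: "\<exists>v. H v \<noteq> 0"
  shows "\<exists>M a. M > 0 \<and> a \<noteq> 0 \<and> H a = M *\<^sub>R a \<and> (\<forall>v. H v = M *\<^sub>R v \<longrightarrow> E v = 0)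
     \<and> \<not> has_eigenvalue H (-(M + M))"
proof -
  define S where "S = {c. has_eigenvalue H c}"
  have fin: "finite S"
    unfolding S_def by (rule finite_eigenvalues[OF linH])
  obtain c0 where c0: "c0 > 0" "c0 \<in> S"
    using positive_eigenvalue[OF Hn] unfolding S_def by blast
  define M where "M = Max S"
  have MS: "M \<in> S"
    unfolding M_def using fin c0(2) by (intro Max_in) auto
  have le_M: "c \<le> M" if "has_eigenvalue H c" for c
    unfolding M_def S_def using fin that by (simp add: S_def)
  have M0: "M > 0"
    using le_M c0 unfolding S_def by fastforce
  obtain a where a: "a \<noteq> 0" "H a = M *\<^sub>R a"
    using MS unfolding S_def has_eigenvalue_def by blast
  have E_kills: "E v = 0" if "H v = M *\<^sub>R v" for v
  proof (rule ccontr)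
    assume "E v \<noteq> 0"
    moreover have "H (E v) = (M + 2) *\<^sub>R E v"
      using E_pow_weight[OF that, of 1] by simp
    ultimately have "has_eigenvalue H (M + 2)"
      unfolding has_eigenvalue_def by blast
    then show False
      using le_M by fastforce
  qed
  have no_minus_2M: "\<not> has_eigenvalue H (-(M + M))"
  proof
    assume "has_eigenvalue H (-(M + M))"
    then obtain n where "has_eigenvalue H (real n)" "- real n \<le> -(M + M)"
      using weight_lower_bound by blast
    then show False
      using le_M M0 by fastforce
  qed
  show ?thesis
    using M0 a E_kills no_minus_2M by blast
qed

lemma invariant_line_trivial:
  assumes s: "E a = s *\<^sub>R a" and t: "F a = t *\<^sub>R a"
  shows "H a = 0 \<and> E a = 0"
proof -
  have "H a = E (F a) - F (E a)"
    using EF by simp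
  also have "\<dots> = 0"
    using s t linear_scale[OF linE] linear_scale[OF linF] by simp
  finally have Ha: "H a = 0" .
  have "2 *\<^sub>R E a = 0"
    using HE[rule_format, of a] Ha s linear_scale[OF linH] linear_0[OF linE] by simp
  then show ?thesis
    using Ha by simp
qed

end

section \<open>Dual representations\<close>

lemma adjoint_commutator:
  fixes A B D :: "'a::euclidean_space \<Rightarrow> 'a"
  assumes A: "linear A" and B: "linear B" and D: "linear D"
    and AB: "\<forall>v. A (B v) - B (A v) = c *\<^sub>R D v"
  shows "\<forall>v. adjoint A (adjoint B v) - adjoint B (adjoint A v) = (-c) *\<^sub>R adjoint D v"
proof
  fix v
  have "x \<bullet> (adjoint A (adjoint B v) - adjoint B (adjoint A v)) = x \<bullet> ((-c) *\<^sub>R adjoint D v)" for x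
  proof -
    have "A (B x) = B (A x) + c *\<^sub>R D x"
      using AB[rule_format, of x] by (simp add: diff_eq_eq add.commute)
    then show ?thesis
      by (simp add: inner_diff_right inner_add_left adjoint_works[OF A] adjoint_works[OF B]
          adjoint_works[OF D])
  qed
  then show "adjoint A (adjoint B v) - adjoint B (adjoint A v) = (-c) *\<^sub>R adjoint D v"
    using vector_eq_ldot by blast
qed

text \<open>The dual of an sl2-triple: X acts on the dual space as the negative adjoint.\<close>

lemma adjoint_sl2_triple:
  assumes "sl2_triple E F H"
  shows "sl2_triple (\<lambda>v. - adjoint E v) (\<lambda>v. - adjoint F v) (\<lambda>v. - adjoint H v)"
proof -
  interpret sl2_triple E F H by fact
  have lin: "linear (adjoint X)" "linear (\<lambda>v. - adjoint X v)" if "linear X" for X :: "'a \<Rightarrow> 'a"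
  proof -
    show adj: "linear (adjoint X)"
      by (rule adjoint_linear[OF that])
    show "linear (\<lambda>v. - adjoint X v)"
      by (rule linearI) (simp_all add: linear_add[OF adj] linear_scale[OF adj])
  qed
  note d1 = adjoint_commutator[OF linH linE linE HE]
  note d2 = adjoint_commutator[OF linH linF linF HF]
  note d3 = adjoint_commutator[OF linE linF linH, of 1] EF
  show ?thesis
  proof (rule sl2_triple.intro)
    show "linear (\<lambda>v. - adjoint E v)" "linear (\<lambda>v. - adjoint F v)" "linear (\<lambda>v. - adjoint H v)"
      using lin linE linF linH by blast+
    show "\<forall>v. - adjoint H (- adjoint E v) - - adjoint E (- adjoint H v) = 2 *\<^sub>R - adjoint E v"
      using d1 by (simp add: linear_neg[OF lin(1)[OF linH]] linear_neg[OF lin(1)[OF linE]])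
    show "\<forall>v. - adjoint H (- adjoint F v) - - adjoint F (- adjoint H v) = (-2) *\<^sub>R - adjoint F v"
      using d2 by (simp add: linear_neg[OF lin(1)[OF linH]] linear_neg[OF lin(1)[OF linF]])
    show "\<forall>v. - adjoint E (- adjoint F v) - - adjoint F (- adjoint E v) = - adjoint H v"
      using d3 by (simp add: linear_neg[OF lin(1)[OF linE]] linear_neg[OF lin(1)[OF linF]])
  qed
qed

lemma adjoint_commute:
  fixes X Y :: "'a::euclidean_space \<Rightarrow> 'a"
  assumes "linear X" "linear Y" "\<forall>v. X (Y v) = Y (X v)"
  shows "- adjoint X (- adjoint Y v) = - adjoint Y (- adjoint X v)"
proof -
  have "\<forall>v. X (Y v) - Y (X v) = 0 *\<^sub>R X v"
    using assms(3) by simp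
  from adjoint_commutator[OF assms(1,2,1) this] show ?thesis
    using linear_neg[OF adjoint_linear[OF assms(1)]] linear_neg[OF adjoint_linear[OF assms(2)]]
    by simp
qed

text \<open>A functional f with f \<circ> X = c f, represented by the vector adjoint f 1, is an
  eigenvector of the adjoint of X.\<close>

lemma adjoint_eigen_functional:
  fixes X :: "'a::euclidean_space \<Rightarrow> 'a" and f :: "'a \<Rightarrow> real"
  assumes X: "linear X" and f: "linear f" and eig: "\<And>d. f (X d) = c * f d"
  shows "adjoint X (adjoint f 1) = c *\<^sub>R adjoint f 1"
proof -
  have "x \<bullet> adjoint X (adjoint f 1) = x \<bullet> (c *\<^sub>R adjoint f 1)" for x
    by (simp add: adjoint_works[OF X] adjoint_works[OF f] eig)
  then show ?thesis
    using vector_eq_ldot by blast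
qed

definition eigenspace_dim_le_1 :: "('a::real_vector \<Rightarrow> 'a) \<Rightarrow> real \<Rightarrow> bool" where
  "eigenspace_dim_le_1 X c \<longleftrightarrow>
     (\<forall>x y. X x = c *\<^sub>R x \<longrightarrow> X y = c *\<^sub>R y \<longrightarrow> x \<noteq> 0 \<longrightarrow> y \<in> span {x})"

lemma eigenspace_dim_le_1_neg:
  assumes "eigenspace_dim_le_1 X c"
  shows "eigenspace_dim_le_1 (\<lambda>v. - X v) (- c)"
  unfolding eigenspace_dim_le_1_def
proof (intro allI impI)
  fix x y
  assume "- X x = (- c) *\<^sub>R x" "- X y = (- c) *\<^sub>R y" "x \<noteq> 0"
  then have "X x = c *\<^sub>R x" "X y = c *\<^sub>R y" "x \<noteq> 0"
    by simp_all
  then show "y \<in> span {x}"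
    using assms unfolding eigenspace_dim_le_1_def by blast
qed

text \<open>If the kernel of A lies in a line, the range of A is at least a hyperplane: A is
  injective on the hyperplane orthogonal to that line.\<close>

lemma dim_range_kernel_in_line:
  fixes A :: "'a::euclidean_space \<Rightarrow> 'a"
  assumes A: "linear A" and a: "a \<noteq> 0" and ker: "\<And>x. A x = 0 \<Longrightarrow> x \<in> span {a}"
  shows "DIM('a) - 1 \<le> dim (range A)"
proof -
  define Z where "Z = {x. a \<bullet> x = 0}"
  have "subspace Z"
    unfolding Z_def by (rule subspace_hyperplane)
  have "inj_on A (span Z)"
  proof (rule inj_onI)
    fix x y assume xy: "x \<in> span Z" "y \<in> span Z" "A x = A y"
    have "span Z = Z"
      using \<open>subspace Z\<close> real_vector.span_eq_iff by blast
    then have "x \<in> Z" "y \<in> Z"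
      using xy(1,2) by blast+
    then have "a \<bullet> x = 0" "a \<bullet> y = 0"
      by (simp_all add: Z_def)
    then have "a \<bullet> (x - y) = 0"
      by (simp add: inner_diff_right)
    moreover have "x - y \<in> span {a}"
      using ker xy(3) linear_diff[OF A] by simp
    then obtain k where k: "x - y = k *\<^sub>R a"
      by (auto simp: real_vector.span_singleton)
    ultimately have "k = 0"
      using a by simp
    then show "x = y"
      using k by simp
  qed
  then have "dim (A ` Z) = DIM('a) - 1"
    using eucl.dim_image_eq[OF A] dim_hyperplane[OF a] by (simp add: Z_def)
  moreover have "dim (A ` Z) \<le> dim (range A)"
    by (rule eucl.dim_subset) auto
  ultimately show ?thesis
    by simp
qed

lemma orthogonal_range_line:
  fixes A :: "'a::euclidean_space \<Rightarrow> 'a"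
  assumes A: "linear A" and a: "a \<noteq> 0" and ker: "\<And>x. A x = 0 \<Longrightarrow> x \<in> span {a}"
    and q1: "q1 \<noteq> 0" and o1: "\<forall>x. q1 \<bullet> A x = 0" and o2: "\<forall>x. q2 \<bullet> A x = 0"
  shows "q2 \<in> span {q1}"
proof (rule ccontr)
  assume nq: "q2 \<notin> span {q1}"
  have ind: "independent {q2, q1}"
    using nq q1 by (simp add: real_vector.independent_insertI real_vector.independent_empty
        real_vector.span_empty)
  have "q2 \<noteq> q1"
    using nq real_vector.span_base by blast
  then have dim_q: "dim (span {q2, q1}) = 2"
    using real_vector.dim_span_eq_card_independent[OF ind] by simp
  define Y where "Y = {y. \<forall>x \<in> span {q2, q1}. orthogonal x y}"
  have "dim Y + dim (span {q2, q1}) = DIM('a)"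
    unfolding Y_def using dim_subspace_orthogonal_to_vectors[of "span {q2, q1}" UNIV]
    by (simp add: real_vector.subspace_span)
  then have dim_Y: "dim Y = DIM('a) - 2"
    using dim_q by simp
  have "range A \<subseteq> Y"
  proof
    fix y assume "y \<in> range A"
    then obtain x where y: "y = A x" by blast
    have "subspace {z. z \<bullet> A x = 0}"
      by (rule subspace_hyperplane2)
    then have "z \<bullet> A x = 0" if "z \<in> span {q2, q1}" for z
      using that o1 o2 real_vector.span_induct[of z "{q2, q1}" "\<lambda>z. z \<bullet> A x = 0"] by auto
    then show "y \<in> Y"
      unfolding Y_def y orthogonal_def by blast
  qed
  then have "dim (range A) \<le> DIM('a) - 2"
    using eucl.dim_subset[OF \<open>range A \<subseteq> Y\<close>] dim_Y by simp
  moreover have "DIM('a) \<ge> 2"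
    using eucl.independent_card_le_dim[OF subset_UNIV ind] \<open>q2 \<noteq> q1\<close> by simp
  ultimately show False
    using dim_range_kernel_in_line[OF A a ker] by simp
qed

lemma eigenspace_in_line:
  fixes X :: "'a::euclidean_space \<Rightarrow> 'a"
  assumes line: "eigenspace_dim_le_1 X c"
  obtains a where "a \<noteq> 0" "\<And>x. X x = c *\<^sub>R x \<Longrightarrow> x \<in> span {a}"
proof (cases "\<exists>x0. x0 \<noteq> 0 \<and> X x0 = c *\<^sub>R x0")
  case True
  then obtain x0 where "x0 \<noteq> 0" "X x0 = c *\<^sub>R x0" by blast
  then show ?thesis
    using that line unfolding eigenspace_dim_le_1_def by auto
next
  case False
  obtain b :: 'a where "b \<in> Basis"
    using nonempty_Basis by blast
  then have "b \<noteq> 0"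
    by (rule nonzero_Basis)
  then show ?thesis
  proof (rule that)
    fix x assume "X x = c *\<^sub>R x"
    then have "x = 0"
      using False by auto
    then show "x \<in> span {b}"
      by (simp add: real_vector.span_zero)
  qed
qed

text \<open>The adjoint of X has an eigenspace of dimension at most one wherever X has: its
  eigenvectors are orthogonal to the range of X - c.\<close>

lemma adjoint_eigenspace_dim_le_1:
  fixes X :: "'a::euclidean_space \<Rightarrow> 'a"
  assumes X: "linear X" and line: "eigenspace_dim_le_1 X c"
  shows "eigenspace_dim_le_1 (adjoint X) c"
proof -
  define A where "A x = X x - c *\<^sub>R x" for x
  have A: "linear A"
    unfolding A_def by (rule linearI) (simp_all add: linear_add[OF X] linear_scale[OF X] algebra_simps)
  obtain a where a: "a \<noteq> 0" "\<And>x. A x = 0 \<Longrightarrow> x \<in> span {a}"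
    using eigenspace_in_line[OF line] unfolding A_def by auto
  have orth: "\<forall>x. q \<bullet> A x = 0" if "adjoint X q = c *\<^sub>R q" for q
  proof
    fix x
    have "q \<bullet> X x = x \<bullet> adjoint X q"
      using adjoint_works[OF X, of x q] by (simp add: inner_commute)
    then show "q \<bullet> A x = 0"
      using that by (simp add: A_def inner_diff_right inner_commute)
  qed
  show ?thesis
    unfolding eigenspace_dim_le_1_def
  proof (intro allI impI)
    fix q1 q2
    assume q1: "adjoint X q1 = c *\<^sub>R q1" and q2: "adjoint X q2 = c *\<^sub>R q2" and "q1 \<noteq> 0"
    then show "q2 \<in> span {q1}"
      using orthogonal_range_line[OF A a \<open>q1 \<noteq> 0\<close> orth[OF q1] orth[OF q2]] by blast
  qed
qed

section \<open>Invariant pairings\<close>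

text \<open>wedge : W \<times> W \<rightarrow> W* is equivariant for X, where X acts on W* dually.\<close>

definition invariant_pairing :: "('a::real_vector \<Rightarrow> 'a \<Rightarrow> 'a \<Rightarrow> real) \<Rightarrow> ('a \<Rightarrow> 'a) \<Rightarrow> bool" where
  "invariant_pairing wedge X \<longleftrightarrow>
     (\<forall>a b c. wedge (X a) b c + wedge a (X b) c = - wedge a b (X c))"

lemma invariant_pairing_weight:
  assumes inv: "invariant_pairing wedge X" and wb: "\<forall>c. bilinear (\<lambda>a b. wedge a b c)"
    and a: "X a = \<alpha> *\<^sub>R a" and b: "X b = \<beta> *\<^sub>R b"
  shows "wedge a b (X d) = - (\<alpha> + \<beta>) * wedge a b d"
proof -
  have "wedge (X a) b d = \<alpha> * wedge a b d"
    using a bilinear_lmul[OF wb[rule_format, of d]] by simp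
  moreover have "wedge a (X b) d = \<beta> * wedge a b d"
    using b bilinear_rmul[OF wb[rule_format, of d]] by simp
  moreover have "wedge (X a) b d + wedge a (X b) d = - wedge a b (X d)"
    using inv unfolding invariant_pairing_def by blast
  ultimately show ?thesis
    by (simp add: algebra_simps)
qed

text \<open>Such a functional vanishes unless -(\<alpha> + \<beta>) is an eigenvalue of X, since then
  X + (\<alpha> + \<beta>) is onto.\<close>

lemma invariant_pairing_vanishes:
  fixes wedge :: "'a::euclidean_space \<Rightarrow> 'a \<Rightarrow> 'a \<Rightarrow> real"
  assumes wl: "\<forall>a b. linear (wedge a b)" and wb: "\<forall>c. bilinear (\<lambda>a b. wedge a b c)"
    and X: "linear X" and inv: "invariant_pairing wedge X"
    and a: "X a = \<alpha> *\<^sub>R a" and b: "X b = \<beta> *\<^sub>R b"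
    and no_eig: "\<not> has_eigenvalue X (-(\<alpha> + \<beta>))"
  shows "wedge a b c = 0"
proof -
  have lw: "linear (wedge a b)"
    using wl by blast
  define G where "G v = X v + (\<alpha> + \<beta>) *\<^sub>R v" for v
  have G: "linear G"
    unfolding G_def by (rule linearI) (simp_all add: linear_add[OF X] linear_scale[OF X] algebra_simps)
  have "inj G"
  proof (rule linear_injective_0[OF G, THEN iffD2], intro allI impI)
    fix v assume "G v = 0"
    then have "X v = - ((\<alpha> + \<beta>) *\<^sub>R v)"
      unfolding G_def by (simp add: eq_neg_iff_add_eq_0)
    then have "X v = (-(\<alpha> + \<beta>)) *\<^sub>R v"
      by (simp only: scaleR_minus_left)
    then show "v = 0"
      using no_eig unfolding has_eigenvalue_def by blast
  qed
  then obtain d where d: "c = G d"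
    using eucl.linear_injective_imp_surjective[OF G] by (metis surjD)
  have "wedge a b c = wedge a b (X d) + (\<alpha> + \<beta>) * wedge a b d"
    using d linear_add[OF lw] linear_scale[OF lw] unfolding G_def by simp
  also have "\<dots> = 0"
    by (simp add: invariant_pairing_weight[OF inv wb a b] algebra_simps)
  finally show ?thesis .
qed

lemma pairing_nonzero_on_plane:
  fixes wedge :: "'a::euclidean_space \<Rightarrow> 'a \<Rightarrow> 'a \<Rightarrow> real"
  assumes wb: "\<forall>c. bilinear (\<lambda>a b. wedge a b c)" and ws: "\<forall>a b. wedge a b = wedge b a"
    and nd: "\<forall>U. subspace U \<and> dim U = 2 \<longrightarrow> (\<exists>a\<in>U. \<exists>b\<in>U. (\<exists>c. wedge a b c \<noteq> 0))"
    and a: "a \<noteq> 0" and b: "b \<notin> span {a}"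
  shows "\<exists>c. wedge a a c \<noteq> 0 \<or> wedge b b c \<noteq> 0 \<or> wedge a b c \<noteq> 0"
proof (rule ccontr)
  assume "\<not> ?thesis"
  then have vanish_ab: "wedge a a c = 0" "wedge b b c = 0" "wedge a b c = 0" for c
    by auto
  have vanish: "wedge a a c = 0" "wedge b b c = 0" "wedge a b c = 0" "wedge b a c = 0" for c
    using vanish_ab by (simp_all add: ws[rule_format, of b a])
  define U where "U = span {b, a}"
  have ind: "independent {b, a}"
    using b a by (simp add: real_vector.independent_insertI real_vector.independent_empty
        real_vector.span_empty)
  have "b \<noteq> a"
    using b real_vector.span_base by blast
  then have "dim U = 2"
    unfolding U_def using real_vector.dim_span_eq_card_independent[OF ind] by simp
  then obtain x y c where xy: "x \<in> U" "y \<in> U" "wedge x y c \<noteq> 0"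
    using nd real_vector.subspace_span unfolding U_def by blast
  have comb: "\<exists>k l. z = k *\<^sub>R b + l *\<^sub>R a" if "z \<in> U" for z
  proof -
    from that obtain k where "z - k *\<^sub>R b \<in> span {a}"
      unfolding U_def using real_vector.span_insert[of b "{a}"] by auto
    then obtain l where "z - k *\<^sub>R b = l *\<^sub>R a"
      by (auto simp: real_vector.span_singleton)
    then show ?thesis
      by (metis diff_add_cancel add.commute)
  qed
  obtain k l k' l' where "x = k *\<^sub>R b + l *\<^sub>R a" "y = k' *\<^sub>R b + l' *\<^sub>R a"
    using comb[OF xy(1)] comb[OF xy(2)] by blast
  moreover have bc: "bilinear (\<lambda>a b. wedge a b c)"
    using wb by blast
  ultimately have "wedge x y c = 0"
    using bilinear_ladd[OF bc] bilinear_radd[OF bc] bilinear_lmul[OF bc] bilinear_rmul[OF bc] vanish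
    by simp
  then show False
    using xy(3) by simp
qed

text \<open>If -2M is not an eigenvalue of H, the M-eigenspace of H is at most a line: the
  pairing vanishes on any two M-eigenvectors.\<close>

lemma top_eigenspace_line:
  fixes wedge :: "'a::euclidean_space \<Rightarrow> 'a \<Rightarrow> 'a \<Rightarrow> real"
  assumes wl: "\<forall>a b. linear (wedge a b)" and wb: "\<forall>c. bilinear (\<lambda>a b. wedge a b c)"
    and ws: "\<forall>a b. wedge a b = wedge b a"
    and nd: "\<forall>U. subspace U \<and> dim U = 2 \<longrightarrow> (\<exists>a\<in>U. \<exists>b\<in>U. (\<exists>c. wedge a b c \<noteq> 0))"
    and H: "linear H" and inv: "invariant_pairing wedge H"
    and no_eig: "\<not> has_eigenvalue H (-(M + M))"
  shows "eigenspace_dim_le_1 H M"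
  unfolding eigenspace_dim_le_1_def
proof (intro allI impI, rule ccontr)
  fix x y
  assume x: "H x = M *\<^sub>R x" and y: "H y = M *\<^sub>R y" and "x \<noteq> 0" "y \<notin> span {x}"
  then obtain c where "wedge x x c \<noteq> 0 \<or> wedge y y c \<noteq> 0 \<or> wedge x y c \<noteq> 0"
    using pairing_nonzero_on_plane[OF wb ws nd] by blast
  moreover have "wedge x x c = 0" "wedge y y c = 0" "wedge x y c = 0"
    by (rule invariant_pairing_vanishes[OF wl wb H inv x x no_eig],
        rule invariant_pairing_vanishes[OF wl wb H inv y y no_eig],
        rule invariant_pairing_vanishes[OF wl wb H inv x y no_eig])
  ultimately show False
    by simp
qed

section \<open>Two commuting sl2-triples\<close>

locale commuting_sl2_pair = t1: sl2_triple E1 F1 H1 + t2: sl2_triple E2 F2 H2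
  for E1 F1 H1 E2 F2 H2 :: "'a::euclidean_space \<Rightarrow> 'a" +
  assumes commute: "X \<in> {E1, F1, H1} \<Longrightarrow> Y \<in> {E2, F2, H2} \<Longrightarrow> X (Y v) = Y (X v)"
begin

lemma swap: "commuting_sl2_pair E2 F2 H2 E1 F1 H1"
proof (intro commuting_sl2_pair.intro commuting_sl2_pair_axioms.intro)
  show "sl2_triple E2 F2 H2" by (rule t2.sl2_triple_axioms)
  show "sl2_triple E1 F1 H1" by (rule t1.sl2_triple_axioms)
next
  fix X Y v
  assume "X \<in> {E2, F2, H2}" "Y \<in> {E1, F1, H1}"
  then show "X (Y v) = Y (X v)"
    using commute[of Y X v] by simp
qed

lemma adjoint_pair:
  "commuting_sl2_pair (\<lambda>v. - adjoint E1 v) (\<lambda>v. - adjoint F1 v) (\<lambda>v. - adjoint H1 v)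
     (\<lambda>v. - adjoint E2 v) (\<lambda>v. - adjoint F2 v) (\<lambda>v. - adjoint H2 v)"
proof (intro commuting_sl2_pair.intro commuting_sl2_pair_axioms.intro)
  show "sl2_triple (\<lambda>v. - adjoint E1 v) (\<lambda>v. - adjoint F1 v) (\<lambda>v. - adjoint H1 v)"
    by (rule adjoint_sl2_triple[OF t1.sl2_triple_axioms])
  show "sl2_triple (\<lambda>v. - adjoint E2 v) (\<lambda>v. - adjoint F2 v) (\<lambda>v. - adjoint H2 v)"
    by (rule adjoint_sl2_triple[OF t2.sl2_triple_axioms])
next
  fix X Y v
  assume X: "X \<in> {\<lambda>v. - adjoint E1 v, \<lambda>v. - adjoint F1 v, \<lambda>v. - adjoint H1 v}"
    and Y: "Y \<in> {\<lambda>v. - adjoint E2 v, \<lambda>v. - adjoint F2 v, \<lambda>v. - adjoint H2 v}"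
  have "\<exists>X0\<in>{E1, F1, H1}. X = (\<lambda>v. - adjoint X0 v)"
    using X by simp
  then obtain X0 where X0: "X0 \<in> {E1, F1, H1}" "X = (\<lambda>v. - adjoint X0 v)" ..
  have "\<exists>Y0\<in>{E2, F2, H2}. Y = (\<lambda>v. - adjoint Y0 v)"
    using Y by simp
  then obtain Y0 where Y0: "Y0 \<in> {E2, F2, H2}" "Y = (\<lambda>v. - adjoint Y0 v)" ..
  have lin: "linear X0" "linear Y0"
    using X0(1) Y0(1) t1.linE t1.linF t1.linH t2.linE t2.linF t2.linH by auto
  have "\<forall>w. X0 (Y0 w) = Y0 (X0 w)"
    using commute[OF X0(1) Y0(1)] by blast
  then show "X (Y v) = Y (X v)"
    unfolding X0(2) Y0(2) by (rule adjoint_commute[OF lin])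
qed

lemma trivial_on_top_line:
  assumes a: "a \<noteq> 0" "H1 a = c *\<^sub>R a" and line: "eigenspace_dim_le_1 H1 c"
  shows "H2 a = 0 \<and> E2 a = 0"
proof -
  have "H1 (E2 a) = c *\<^sub>R E2 a"
    using commute[of H1 E2 a] a(2) linear_scale[OF t2.linE] by simp
  then obtain s where "E2 a = s *\<^sub>R a"
    using line a unfolding eigenspace_dim_le_1_def by (auto simp: real_vector.span_singleton)
  moreover have "H1 (F2 a) = c *\<^sub>R F2 a"
    using commute[of H1 F2 a] a(2) linear_scale[OF t2.linF] by simp
  then obtain t where "F2 a = t *\<^sub>R a"
    using line a unfolding eigenspace_dim_le_1_def by (auto simp: real_vector.span_singleton)
  ultimately show ?thesis
    by (rule t2.invariant_line_trivial)
qed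

text \<open>A joint highest weight vector of weights (M, N) with N \<noteq> 0 cannot exist if the
  (-M)-eigenspace of H1 is a line: its joint lowest weight vector would span that line,
  so the second triple would kill it, contradicting N \<noteq> 0.\<close>

lemma no_joint_highest_vector:
  assumes v: "v \<noteq> 0" "E1 v = 0" "E2 v = 0" "H1 v = M *\<^sub>R v" "H2 v = N *\<^sub>R v"
    and N: "N \<noteq> 0" and line: "eigenspace_dim_le_1 H1 (- M)"
  shows False
proof -
  obtain n1 where n1: "(F1 ^^ n1) v \<noteq> 0" "H1 ((F1 ^^ n1) v) = (- M) *\<^sub>R (F1 ^^ n1) v"
    using t1.highest_weight[OF v(1,2,4)] by blast
  define q1 where "q1 = (F1 ^^ n1) v"
  have "\<forall>w. E2 (F1 w) = F1 (E2 w)" "\<forall>w. H2 (F1 w) = F1 (H2 w)"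
    using commute[of F1 E2] commute[of F1 H2] by auto
  then have "E2 q1 = (F1 ^^ n1) (E2 v)" "H2 q1 = (F1 ^^ n1) (H2 v)"
    unfolding q1_def by (simp_all add: commute_funpow)
  then have q1: "E2 q1 = 0" "H2 q1 = N *\<^sub>R q1"
    using v(3,5) linear_0[OF t1.linear_F_pow] linear_scale[OF t1.linear_F_pow]
    by (simp_all add: q1_def)
  obtain n2 where n2: "(F2 ^^ n2) q1 \<noteq> 0" "H2 ((F2 ^^ n2) q1) = (- N) *\<^sub>R (F2 ^^ n2) q1"
    using t2.highest_weight[OF n1(1)[folded q1_def] q1] by blast
  define q where "q = (F2 ^^ n2) q1"
  have "\<forall>w. H1 (F2 w) = F2 (H1 w)"
    using commute[of H1 F2] by auto
  then have "H1 q = (F2 ^^ n2) (H1 q1)"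
    unfolding q_def by (simp add: commute_funpow)
  then have "H1 q = (- M) *\<^sub>R q"
    using n1(2) linear_scale[OF t2.linear_F_pow] by (simp add: q_def q1_def linear_neg[OF t2.linear_F_pow])
  then have "H2 q = 0"
    using trivial_on_top_line[OF n2(1)[folded q_def] _ line] by blast
  then show False
    using n2 N unfolding q_def by simp
qed

text \<open>For top weight vectors a of H1 and b of H2 on which the other triple acts trivially,
  the functional wedge a b is a joint highest weight vector of the dual representation
  (weights M and N), so it must vanish.\<close>

lemma mixed_pairing_vanishes:
  fixes wedge :: "'a \<Rightarrow> 'a \<Rightarrow> 'a \<Rightarrow> real"
  assumes wl: "\<forall>a b. linear (wedge a b)" and wb: "\<forall>c. bilinear (\<lambda>a b. wedge a b c)"
    and inv: "\<And>X. X \<in> {E1, H1, E2, H2} \<Longrightarrow> invariant_pairing wedge X"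
    and a: "E1 a = 0" "E2 a = 0" "H1 a = M *\<^sub>R a" "H2 a = 0"
    and b: "E1 b = 0" "E2 b = 0" "H1 b = 0" "H2 b = N *\<^sub>R b"
    and N: "N \<noteq> 0" and line: "eigenspace_dim_le_1 H1 M"
  shows "wedge a b c = 0"
proof -
  interpret dual: commuting_sl2_pair "\<lambda>v. - adjoint E1 v" "\<lambda>v. - adjoint F1 v"
    "\<lambda>v. - adjoint H1 v" "\<lambda>v. - adjoint E2 v" "\<lambda>v. - adjoint F2 v" "\<lambda>v. - adjoint H2 v"
    by (rule adjoint_pair)
  have lw: "linear (wedge a b)"
    using wl by blast
  define p where "p = adjoint (wedge a b) 1"
  have p: "wedge a b d = d \<bullet> p" for d
    unfolding p_def using adjoint_works[OF lw, of d 1] by simp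
  have dual_weight: "- adjoint X p = (\<alpha> + \<beta>) *\<^sub>R p"
    if X: "X \<in> {E1, H1, E2, H2}" and "X a = \<alpha> *\<^sub>R a" "X b = \<beta> *\<^sub>R b" for X \<alpha> \<beta>
  proof -
    have "linear X"
      using X t1.linE t1.linH t2.linE t2.linH by auto
    from adjoint_eigen_functional[OF this lw invariant_pairing_weight[OF inv[OF X] wb that(2,3)]]
    have "adjoint X p = (- (\<alpha> + \<beta>)) *\<^sub>R p"
      unfolding p_def .
    then show ?thesis
      by (metis minus_minus scaleR_minus_left)
  qed
  have p_weights: "- adjoint E1 p = 0" "- adjoint E2 p = 0"
    "- adjoint H1 p = M *\<^sub>R p" "- adjoint H2 p = N *\<^sub>R p"
    using dual_weight[of E1 0 0] dual_weight[of E2 0 0] dual_weight[of H1 M 0] dual_weight[of H2 0 N]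
      a b by simp_all
  have dual_line: "eigenspace_dim_le_1 (\<lambda>v. - adjoint H1 v) (- M)"
    by (rule eigenspace_dim_le_1_neg[OF adjoint_eigenspace_dim_le_1[OF t1.linH line]])
  show ?thesis
  proof (cases "p = 0")
    case True
    then show ?thesis using p by simp
  next
    case False
    from dual.no_joint_highest_vector[OF False p_weights N dual_line] show ?thesis ..
  qed
qed

theorem no_nondegenerate_invariant_pairing:
  fixes wedge :: "'a \<Rightarrow> 'a \<Rightarrow> 'a \<Rightarrow> real"
  assumes H1n: "\<exists>v. H1 v \<noteq> 0" and H2n: "\<exists>v. H2 v \<noteq> 0"
    and wl: "\<forall>a b. linear (wedge a b)" and wb: "\<forall>c. bilinear (\<lambda>a b. wedge a b c)"
    and ws: "\<forall>a b. wedge a b = wedge b a"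
    and inv: "\<And>X. X \<in> {E1, H1, E2, H2} \<Longrightarrow> invariant_pairing wedge X"
    and nd: "\<forall>U. subspace U \<and> dim U = 2 \<longrightarrow> (\<exists>a\<in>U. \<exists>b\<in>U. (\<exists>c. wedge a b c \<noteq> 0))"
  shows False
proof -
  interpret swapped: commuting_sl2_pair E2 F2 H2 E1 F1 H1
    by (rule swap)
  obtain M a where M: "M > 0" "a \<noteq> 0" "H1 a = M *\<^sub>R a" "\<forall>v. H1 v = M *\<^sub>R v \<longrightarrow> E1 v = 0"
    "\<not> has_eigenvalue H1 (-(M + M))"
    using t1.top_weight[OF H1n] by blast
  obtain N b where N: "N > 0" "b \<noteq> 0" "H2 b = N *\<^sub>R b" "\<forall>v. H2 v = N *\<^sub>R v \<longrightarrow> E2 v = 0"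
    "\<not> has_eigenvalue H2 (-(N + N))"
    using t2.top_weight[OF H2n] by blast
  have inv_H: "invariant_pairing wedge H1" "invariant_pairing wedge H2"
    using inv by simp_all
  have line1: "eigenspace_dim_le_1 H1 M"
    by (rule top_eigenspace_line[OF wl wb ws nd t1.linH inv_H(1) M(5)])
  have line2: "eigenspace_dim_le_1 H2 N"
    by (rule top_eigenspace_line[OF wl wb ws nd t2.linH inv_H(2) N(5)])
  have aH2: "H2 a = 0" and aE2: "E2 a = 0"
    using trivial_on_top_line[OF M(2,3) line1] by auto
  have bH1: "H1 b = 0" and bE1: "E1 b = 0"
    using swapped.trivial_on_top_line[OF N(2,3) line2] by auto
  have "b \<notin> span {a}"
  proof
    assume "b \<in> span {a}"
    then obtain k where "b = k *\<^sub>R a"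
      by (auto simp: real_vector.span_singleton)
    then have "H2 b = 0"
      using aH2 linear_scale[OF t2.linH] by simp
    then show False
      using N(1-3) by simp
  qed
  have aa: "wedge a a c = 0" for c
    by (rule invariant_pairing_vanishes[OF wl wb t1.linH inv_H(1) M(3) M(3) M(5)])
  have bb: "wedge b b c = 0" for c
    by (rule invariant_pairing_vanishes[OF wl wb t2.linH inv_H(2) N(3) N(3) N(5)])
  have aE1: "E1 a = 0" and bE2: "E2 b = 0"
    using M(3,4) N(3,4) by blast+
  have "N \<noteq> 0"
    using N(1) by simp
  then have ab: "wedge a b c = 0" for c
    using mixed_pairing_vanishes[OF wl wb inv aE1 aE2 M(3) aH2 bE1 bE2 bH1 N(3) _ line1] by blast
  show False
    using pairing_nonzero_on_plane[OF wb ws nd M(2) \<open>b \<notin> span {a}\<close>] aa bb ab by blast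
qed

end

section \<open>The Lie algebra sl2 + sl2\<close>

definition sl2_e :: "real^2^2" where "sl2_e = (\<chi> i j. if i = 1 \<and> j = 2 then 1 else 0)"
definition sl2_f :: "real^2^2" where "sl2_f = (\<chi> i j. if i = 2 \<and> j = 1 then 1 else 0)"
definition sl2_h :: "real^2^2" where "sl2_h = (\<chi> i j. if i = j then (if i = 1 then 1 else -1) else 0)"

lemma sl2_relations:
  "sl2_h ** sl2_e - sl2_e ** sl2_h = 2 *\<^sub>R sl2_e"
  "sl2_h ** sl2_f - sl2_f ** sl2_h = (-2) *\<^sub>R sl2_f"
  "sl2_e ** sl2_f - sl2_f ** sl2_e = sl2_h"
  by (simp_all add: vec_eq_iff forall_2 matrix_matrix_mult_def sl2_e_def sl2_f_def sl2_h_def UNIV_2)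

lemma sl2_traceless: "trace sl2_e = 0" "trace sl2_f = 0" "trace sl2_h = 0" "trace (0::real^2^2) = 0"
  by (simp_all add: trace_def sl2_e_def sl2_f_def sl2_h_def UNIV_2)

lemma sl2_h_nonzero: "sl2_h \<noteq> 0"
  by (simp add: vec_eq_iff forall_2 sl2_h_def)

lemma sl2sl2_bracket_copies:
  "sl2sl2_bracket (A, 0) (B, 0) = (A ** B - B ** A, 0)"
  "sl2sl2_bracket (0, A) (0, B) = (0, A ** B - B ** A)"
  "sl2sl2_bracket (A, 0) (0, B) = 0"
  by (simp_all add: sl2sl2_bracket_def zero_prod_def)

lemma sl2sl2_faithful_rep:
  assumes sub: "has_sl2sl2_subalgebra br" and rep: "lie_rep br rho" and inj: "inj rho"
  obtains R where "\<And>p. linear (R p)" "\<And>p. R p \<in> range rho"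
    "\<And>p q v. p \<in> sl2sl2 \<Longrightarrow> q \<in> sl2sl2 \<Longrightarrow>
       R (sl2sl2_bracket p q) v = R p (R q v) - R q (R p v)"
    "\<And>p c v. p \<in> sl2sl2 \<Longrightarrow> R (c *\<^sub>R p) v = c *\<^sub>R R p v"
    "\<And>p. p \<in> sl2sl2 \<Longrightarrow> p \<noteq> 0 \<Longrightarrow> \<exists>v. R p v \<noteq> 0"
proof -
  obtain phi where
    phi: "\<forall>p\<in>sl2sl2. \<forall>q\<in>sl2sl2. \<forall>c::real. phi (p + q) = phi p + phi q \<and> phi (c *\<^sub>R p) = c *\<^sub>R phi p"
    and phi_inj: "inj_on phi sl2sl2"
    and phi_br: "\<forall>p\<in>sl2sl2. \<forall>q\<in>sl2sl2. phi (sl2sl2_bracket p q) = br (phi p) (phi q)"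
    using sub unfolding has_sl2sl2_subalgebra_def by blast
  have rho_add: "\<forall>x y w. rho (x + y) w = rho x w + rho y w"
    and rho_scale: "\<forall>(c::real) x w. rho (c *\<^sub>R x) w = c *\<^sub>R rho x w"
    and rho_lin: "\<forall>x. linear (rho x)"
    and rho_br: "\<forall>x y w. rho (br x y) w = rho x (rho y w) - rho y (rho x w)"
    using rep unfolding lie_rep_def by blast+
  have zero: "(0::(real^2^2) \<times> (real^2^2)) \<in> sl2sl2"
    unfolding sl2sl2_def using sl2_traceless by (simp add: zero_prod_def)
  have phi0: "phi 0 = 0"
    using phi[rule_format, OF zero zero, of 0] by simp
  have faithful: "\<exists>v. rho (phi p) v \<noteq> 0" if "p \<in> sl2sl2" "p \<noteq> 0" for p
  proof (rule ccontr)
    assume "\<not> ?thesis"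
    then have "rho (phi p) = rho 0"
      using rho_add[rule_format, of 0 0] by (simp add: fun_eq_iff)
    then have "phi p = phi 0"
      using injD[OF inj] phi0 by metis
    then show False
      using inj_onD[OF phi_inj _ that(1) zero] that(2) by blast
  qed
  show ?thesis
  proof (rule that[of "\<lambda>p. rho (phi p)"])
    show "linear (rho (phi p))" for p
      using rho_lin by blast
    show "rho (phi p) \<in> range rho" for p
      by simp
    show "rho (phi (sl2sl2_bracket p q)) v = rho (phi p) (rho (phi q) v) - rho (phi q) (rho (phi p) v)"
      if "p \<in> sl2sl2" "q \<in> sl2sl2" for p q v
      using phi_br that rho_br by simp
    show "rho (phi (c *\<^sub>R p)) v = c *\<^sub>R rho (phi p) v" if "p \<in> sl2sl2" for p c v
      using phi[rule_format, OF that that, of c] rho_scale by simp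
    show "\<exists>v. rho (phi p) v \<noteq> 0" if "p \<in> sl2sl2" "p \<noteq> 0" for p
      by (rule faithful[OF that])
  qed
qed

lemma sl2_triple_of_rep:
  assumes lin: "\<And>p. linear (R p)"
    and br: "\<And>p q v. p \<in> sl2sl2 \<Longrightarrow> q \<in> sl2sl2 \<Longrightarrow>
       R (sl2sl2_bracket p q) v = R p (R q v) - R q (R p v)"
    and scale: "\<And>p c v. p \<in> sl2sl2 \<Longrightarrow> R (c *\<^sub>R p) v = c *\<^sub>R R p v"
    and mem: "e \<in> sl2sl2" "f \<in> sl2sl2" "h \<in> sl2sl2"
    and rel: "sl2sl2_bracket h e = 2 *\<^sub>R e" "sl2sl2_bracket h f = (-2) *\<^sub>R f"
      "sl2sl2_bracket e f = h"
  shows "sl2_triple (R e) (R f) (R h)"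
proof (rule sl2_triple.intro)
  show "linear (R e)" "linear (R f)" "linear (R h)"
    by (fact lin)+
  show "\<forall>v. R h (R e v) - R e (R h v) = 2 *\<^sub>R R e v"
    using br[OF mem(3,1), symmetric] scale[OF mem(1)] by (simp only: rel(1) simp_thms)
  show "\<forall>v. R h (R f v) - R f (R h v) = (-2) *\<^sub>R R f v"
    using br[OF mem(3,2), symmetric] scale[OF mem(2)] by (simp only: rel(2) simp_thms)
  show "\<forall>v. R e (R f v) - R f (R e v) = R h v"
    using br[OF mem(1,2), symmetric] by (simp only: rel(3) simp_thms)
qed

lemma commuting_pair_of_rep:
  assumes lin: "\<And>p. linear (R p)"
    and br: "\<And>p q v. p \<in> sl2sl2 \<Longrightarrow> q \<in> sl2sl2 \<Longrightarrow>
       R (sl2sl2_bracket p q) v = R p (R q v) - R q (R p v)"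
    and scale: "\<And>p c v. p \<in> sl2sl2 \<Longrightarrow> R (c *\<^sub>R p) v = c *\<^sub>R R p v"
  shows "commuting_sl2_pair (R (sl2_e, 0)) (R (sl2_f, 0)) (R (sl2_h, 0))
    (R (0, sl2_e)) (R (0, sl2_f)) (R (0, sl2_h))"
proof -
  have mem: "(A, 0) \<in> sl2sl2" "(0, A) \<in> sl2sl2" if "A \<in> {sl2_e, sl2_f, sl2_h}" for A
    using that sl2_traceless unfolding sl2sl2_def by auto
  show ?thesis
  proof (intro commuting_sl2_pair.intro commuting_sl2_pair_axioms.intro)
    show "sl2_triple (R (sl2_e, 0)) (R (sl2_f, 0)) (R (sl2_h, 0))"
      by (rule sl2_triple_of_rep[OF lin br scale]) (simp_all add: mem sl2sl2_bracket_copies sl2_relations)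
    show "sl2_triple (R (0, sl2_e)) (R (0, sl2_f)) (R (0, sl2_h))"
      by (rule sl2_triple_of_rep[OF lin br scale]) (simp_all add: mem sl2sl2_bracket_copies sl2_relations)
  next
    fix X Y v
    assume X: "X \<in> {R (sl2_e, 0), R (sl2_f, 0), R (sl2_h, 0)}"
      and Y: "Y \<in> {R (0, sl2_e), R (0, sl2_f), R (0, sl2_h)}"
    have "\<exists>A\<in>{sl2_e, sl2_f, sl2_h}. X = R (A, 0)" "\<exists>B\<in>{sl2_e, sl2_f, sl2_h}. Y = R (0, B)"
      using X Y by simp_all
    then obtain A B where AB: "A \<in> {sl2_e, sl2_f, sl2_h}" "B \<in> {sl2_e, sl2_f, sl2_h}"
      "X = R (A, 0)" "Y = R (0, B)"
      by blast
    have "R (A, 0) (R (0, B) v) - R (0, B) (R (A, 0) v) = R (sl2sl2_bracket (A, 0) (0, B)) v"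
      using br mem AB(1,2) by simp
    also have "\<dots> = R (0 *\<^sub>R (A, 0)) v"
      by (simp only: sl2sl2_bracket_copies scaleR_zero_left simp_thms)
    also have "\<dots> = 0 *\<^sub>R R (A, 0) v"
      by (rule scale[OF mem(1)[OF AB(1)]])
    also have "\<dots> = 0"
      by simp
    finally show "X (Y v) = Y (X v)"
      using AB(3,4) by simp
  qed
qed

theorem lemma5p4:
  fixes br :: "'g::real_vector \<Rightarrow> 'g \<Rightarrow> 'g"
    and rho :: "'g \<Rightarrow> 'w::euclidean_space \<Rightarrow> 'w"
    and wedge :: "'w \<Rightarrow> 'w \<Rightarrow> ('w \<Rightarrow> real)"
  assumes "semisimple_lie br"
    and "lie_rep br rho"
    and "inj rho"
    and "\<forall>a b. linear (wedge a b)"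
    and "\<forall>c. bilinear (\<lambda>a b. wedge a b c)"
    and "\<forall>a b. wedge a b = wedge b a"
    and "\<forall>X a b c. wedge (rho X a) b c + wedge a (rho X b) c = - wedge a b (rho X c)"
    and "\<forall>U. subspace U \<and> dim U = 2 \<longrightarrow> (\<exists>a\<in>U. \<exists>b\<in>U. (\<exists>c. wedge a b c \<noteq> 0))"
  shows "\<not> has_sl2sl2_subalgebra br"
proof
  assume "has_sl2sl2_subalgebra br"
  then obtain R where R: "\<And>p. linear (R p)" "\<And>p. R p \<in> range rho"
    "\<And>p q v. p \<in> sl2sl2 \<Longrightarrow> q \<in> sl2sl2 \<Longrightarrow>
       R (sl2sl2_bracket p q) v = R p (R q v) - R q (R p v)"
    "\<And>p c v. p \<in> sl2sl2 \<Longrightarrow> R (c *\<^sub>R p) v = c *\<^sub>R R p v"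
    "\<And>p. p \<in> sl2sl2 \<Longrightarrow> p \<noteq> 0 \<Longrightarrow> \<exists>v. R p v \<noteq> 0"
    using sl2sl2_faithful_rep assms(2,3) by blast
  interpret commuting_sl2_pair "R (sl2_e, 0)" "R (sl2_f, 0)" "R (sl2_h, 0)"
    "R (0, sl2_e)" "R (0, sl2_f)" "R (0, sl2_h)"
    by (rule commuting_pair_of_rep[OF R(1,3,4)])
  have h_copies: "(sl2_h, 0) \<in> sl2sl2" "(sl2_h, 0) \<noteq> 0" "(0, sl2_h) \<in> sl2sl2" "(0, sl2_h) \<noteq> 0"
    using sl2_traceless sl2_h_nonzero by (simp_all add: sl2sl2_def zero_prod_def)
  have inv: "invariant_pairing wedge (R p)" for p
  proof -
    obtain X where "R p = rho X"
      using R(2)[of p] by blast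
    then show ?thesis
      using assms(7) unfolding invariant_pairing_def by simp
  qed
  show False
  proof (rule no_nondegenerate_invariant_pairing[of wedge])
    show "\<exists>v. R (sl2_h, 0) v \<noteq> 0" "\<exists>v. R (0, sl2_h) v \<noteq> 0"
      by (rule R(5)[OF h_copies(1,2)], rule R(5)[OF h_copies(3,4)])
    show "invariant_pairing wedge X"
      if "X \<in> {R (sl2_e, 0), R (sl2_h, 0), R (0, sl2_e), R (0, sl2_h)}" for X
      using that inv by auto
  qed (use assms(4,5,6,8) in auto)
qed

end
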